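(* Let $(\Omega_X,\mathcal{F}_X)$ and $(\Omega_y,\mathcal{F}_y)$ be measurable spaces and $\pi$ a probability measure on $(\Omega_X\times\Omega_y,\mathcal{F}_X\otimes\mathcal{F}_y)$. Let $s:\Omega_X\times\Omega_y\to\mathbb{R}$ be a measurable score function, $N\ge 1$, $\alpha\in[0,1]$, and let $(X_1,y_1),\dots,(X_N,y_N),(X,y)$ be i.i.d. with law $\pi$. Let $\hat q$ be the $\lceil(1-\alpha)(N+1)\rceil$-th smallest value among $s(X_1,y_1),\dots,s(X_N,y_N)$ (with $\hat q=+\infty$ if $\lceil(1-\alpha)(N+1)\rceil>N$), and define the conformal set $S^{(\alpha)}(x)=\{y'\in\Omega_y: s(x,y')\le \hat q\}$. If $X$ and $s(X,y)$ are independent random variables, then $\alpha$-input-space strong conditional coverage holds: for every $\omega_X\in\mathcal{F}_X$ with $\mathbb{P}(X\in\omega_X)>0$, $$\mathbb{P}\big(y\in S^{(\alpha)}(X)\,\big|\,X\in\omega_X\big)\ge 1-\alpha,$$ where the probability is taken jointly over the calibration data $(X_i,y_i)_{i\le N}$ and the test point $(X,y)$.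
   Context: Split-conformal setting: the predictive model (if any) entering $s$ is fixed and independent of the calibration and test data. The calibration points $(X_i,y_i)_{i=1}^N$ and the test point $(X,y)$ are i.i.d. from $\pi$. Probabilities are marginalized over the calibration data. *)

theory Defs
  imports "HOL-Probability.Probability"
begin

text \<open>Split-conformal threshold: the k-th smallest calibration score, with
  k = ceiling((1-alpha)(N+1)), N = number of calibration scores;
  +infinity if k > N.  (k = 0 only when alpha = 1; then we use -infinity.)\<close>
definition conformal_qhat :: "real \<Rightarrow> real list \<Rightarrow> ereal" where
  "conformal_qhat \<alpha> scores =
     (let N = length scores; k = nat \<lceil>(1 - \<alpha>) * real (N + 1)\<rceil> in
      if k > N then \<infinity>
      else if k = 0 then -\<infinity>
      else ereal (sort scores ! (k - 1)))"

definition conformal_set ::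
    "'b measure \<Rightarrow> ('a \<times> 'b \<Rightarrow> real) \<Rightarrow> ereal \<Rightarrow> 'a \<Rightarrow> 'b set" where
  "conformal_set MY s q x = {y' \<in> space MY. ereal (s (x, y')) \<le> q}"

end

theory Submission
  imports Defs
begin

text \<open>The test point is covered iff the rank of its score among all N + 1 scores is below
  k = \<lceil>(1 - \<alpha>)(N + 1)\<rceil>. The N + 1 scores are i.i.d., so a transposition of coordinates
  shows that every index has the same probability of rank below k; since at least k indices
  always do, this probability is at least k / (N + 1) \<ge> 1 - \<alpha>. Finally the test input X is
  independent of that rank: it is independent of its own score by hypothesis, and of the
  calibration scores since the test point is independent of the calibration points, so
  conditioning on X \<in> \<omega>X leaves the probability unchanged.\<close>

definition rank :: "'i set \<Rightarrow> ('i \<Rightarrow> 'a::linorder) \<Rightarrow> 'i \<Rightarrow> nat" where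
  "rank I v j = card {i \<in> I. v i < v j}"

lemma rank_insert_max:
  assumes "\<And>i. i \<in> I \<Longrightarrow> v i \<le> v m" "j \<in> I"
  shows "rank (insert m I) v j = rank I v j"
proof -
  have "\<not> v m < v j" using assms by (simp add: not_less)
  then show ?thesis unfolding rank_def by (intro arg_cong[where f=card]) auto
qed

lemma rank_less_card:
  assumes "finite I" "j \<in> I"
  shows "rank I v j < card I"
  unfolding rank_def using assms by (intro psubset_card_mono) auto

lemma card_rank_less_ge:
  assumes "finite I" "k \<le> card I"
  shows "k \<le> card {j \<in> I. rank I v j < k}"
  using assms
proof (induction I arbitrary: k rule: finite_ranking_induct[where f=v])
  case empty
  then show ?case by simp
next
  case (insert m I)
  show ?case
  proof (cases "k \<le> card I")
    case True
    have "{j \<in> I. rank I v j < k} \<subseteq> {j \<in> insert m I. rank (insert m I) v j < k}"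
      using insert.hyps by (auto simp: rank_insert_max)
    then have "card {j \<in> I. rank I v j < k} \<le> card {j \<in> insert m I. rank (insert m I) v j < k}"
      using insert.hyps by (intro card_mono) auto
    then show ?thesis using insert.IH[OF True] by linarith
  next
    case False
    then have "k = card (insert m I)"
      using insert.prems insert.hyps(1) by (auto simp: card_insert_if split: if_splits)
    then have "rank (insert m I) v j < k" if "j \<in> insert m I" for j
      using rank_less_card[OF _ that] insert.hyps(1) by simp
    then have "{j \<in> insert m I. rank (insert m I) v j < k} = insert m I"
      by blast
    then show ?thesis using \<open>k = card (insert m I)\<close> by (metis order.refl)
  qed
qed

lemma rank_reindex:
  assumes "bij_betw t I I"
  shows "rank I (v \<circ> t) j = rank I v (t j)"
proof -
  have "bij_betw t {i \<in> I. v (t i) < v (t j)} {i \<in> I. v i < v (t j)}"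
    by (rule bij_betw_subset[OF assms]) (use assms in \<open>auto simp: bij_betw_def\<close>)
  then show ?thesis
    unfolding rank_def comp_def by (rule bij_betw_same_card)
qed

lemma rank_restrict:
  assumes "j \<in> I"
  shows "rank I (restrict v I) j = rank I v j"
  unfolding rank_def using assms by (intro arg_cong[where f=card]) auto

lemma measurable_rank [measurable]:
  fixes M :: "'i \<Rightarrow> 'a::{linorder_topology, second_countable_topology} measure"
  assumes "finite I" "j \<in> I" and sets_M: "\<And>i. i \<in> I \<Longrightarrow> sets (M i) = sets borel"
  shows "(\<lambda>v. rank I v j) \<in> measurable (PiM I M) (count_space UNIV)"
proof -
  have [measurable]: "(\<lambda>v. v i) \<in> borel_measurable (PiM I M)" if "i \<in> I" for i
    using measurable_component_singleton[OF that, of M] measurable_cong_sets[OF refl sets_M[OF that]]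
    by blast
  have "rank I v j = (\<Sum>i\<in>I. if v i < v j then 1 else 0)" for v :: "'i \<Rightarrow> 'a"
    unfolding rank_def using assms(1) by (simp add: sum.If_cases Int_def)
  moreover have "(\<lambda>v. \<Sum>i\<in>I. if v i < v j then 1 else 0 :: nat) \<in> measurable (PiM I M) (count_space UNIV)"
    using assms(2) by measurable
  ultimately show ?thesis by simp
qed

lemma measure_PiM_rank_less_eq:
  fixes \<mu> :: "'a::{linorder_topology, second_countable_topology} measure" and I :: "'i set"
  defines "Q \<equiv> PiM I (\<lambda>_. \<mu>)"
  assumes \<mu>: "prob_space \<mu>" "sets \<mu> = sets borel" and I: "finite I" "i \<in> I" "j \<in> I"
  shows "measure Q {v \<in> space Q. rank I v i < k} = measure Q {v \<in> space Q. rank I v j < k}"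
proof -
  define t where "t = Transposition.transpose i j"
  define swap where "swap v = (\<lambda>n\<in>I. v (t n))" for v :: "'i \<Rightarrow> 'a"
  have t: "bij_betw t I I"
    unfolding t_def using I by simp
  have swap_law: "distr Q Q swap = Q"
    unfolding Q_def swap_def using distr_PiM_reindex[of I "\<lambda>_. \<mu>" t I] \<mu>(1)
      bij_betw_imp_inj_on[OF t] bij_betw_imp_funcset[OF t] by simp
  have swap_meas: "swap \<in> measurable Q Q"
    unfolding Q_def swap_def using t
    by (intro measurable_restrict measurable_component_singleton) (auto simp: bij_betw_def)
  have [measurable]: "{v \<in> space Q. rank I v i < k} \<in> sets Q"
    unfolding Q_def using \<mu>(2) I by measurable
  have "measure Q {v \<in> space Q. rank I v i < k} = measure (distr Q Q swap) {v \<in> space Q. rank I v i < k}"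
    by (simp add: swap_law)
  also have "\<dots> = measure Q (swap -` {v \<in> space Q. rank I v i < k} \<inter> space Q)"
    by (rule measure_distr[OF swap_meas]) auto
  also have "swap -` {v \<in> space Q. rank I v i < k} \<inter> space Q = {v \<in> space Q. rank I v j < k}"
  proof -
    have "rank I (swap v) i = rank I v j" for v
      unfolding swap_def using rank_restrict[of i I "v \<circ> t"] rank_reindex[OF t, of v i] I
      by (simp add: comp_def t_def)
    then show ?thesis using measurable_space[OF swap_meas] by auto
  qed
  finally show ?thesis .
qed

lemma measure_PiM_rank_less_ge:
  fixes \<mu> :: "'a::{linorder_topology, second_countable_topology} measure" and I :: "'i set"
  defines "Q \<equiv> PiM I (\<lambda>_. \<mu>)"
  assumes \<mu>: "prob_space \<mu>" "sets \<mu> = sets borel" and I: "finite I" "j \<in> I" "k \<le> card I"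
  shows "real k \<le> real (card I) * measure Q {v \<in> space Q. rank I v j < k}"
proof -
  interpret Q: prob_space Q unfolding Q_def using \<mu>(1) by (intro prob_space_PiM) auto
  define E where "E i = {v \<in> space Q. rank I v i < k}" for i
  have E_sets: "E i \<in> sets Q" if "i \<in> I" for i
    unfolding E_def Q_def using \<mu>(2) I(1) that by measurable
  have integrable_E: "integrable Q (indicator (E i) :: _ \<Rightarrow> real)" if "i \<in> I" for i
    using E_sets[OF that] by (simp add: less_top[symmetric])
  have "real k \<le> (\<integral>v. (\<Sum>i\<in>I. indicator (E i) v) \<partial>Q)"
  proof (rule Q.integral_ge_const)
    show "integrable Q (\<lambda>v. \<Sum>i\<in>I. indicator (E i) v :: real)"
      using integrable_E by auto
    have "(\<Sum>i\<in>I. indicator (E i) v) = real (card {i \<in> I. rank I v i < k})" if "v \<in> space Q" for v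
      using that I(1) by (simp add: E_def indicator_def sum.If_cases Int_def)
    then show "AE v in Q. real k \<le> (\<Sum>i\<in>I. indicator (E i) v)"
      using card_rank_less_ge[OF I(1,3)] by auto
  qed
  also have "\<dots> = (\<Sum>i\<in>I. measure Q (E i))"
    using integrable_E E_sets by (simp add: Bochner_Integration.integral_sum)
  also have "\<dots> = real (card I) * measure Q (E j)"
    using measure_PiM_rank_less_eq[OF \<mu> I(1) _ I(2)] unfolding E_def Q_def by simp
  finally show ?thesis unfolding E_def .
qed

lemma (in prob_space) prob_rank_less_ge:
  fixes X :: "'i \<Rightarrow> 'a \<Rightarrow> 'b::{linorder_topology, second_countable_topology}"
  assumes indep: "indep_vars (\<lambda>_. borel) X I"
    and ident: "\<And>i. i \<in> I \<Longrightarrow> distr M borel (X i) = distr M borel (X j)"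
    and I: "finite I" "j \<in> I" "k \<le> card I"
  shows "real k \<le> real (card I) * prob {\<omega> \<in> space M. rank I (\<lambda>i. X i \<omega>) j < k}"
proof -
  define \<mu> where "\<mu> = distr M borel (X j)"
  define V where "V \<omega> = (\<lambda>i\<in>I. X i \<omega>)" for \<omega>
  define E where "E = {v \<in> space (PiM I (\<lambda>_. borel :: 'b measure)). rank I v j < k}"
  have rv: "random_variable borel (X i)" if "i \<in> I" for i
    using indep that unfolding indep_vars_def by blast
  have V_meas: "V \<in> measurable M (PiM I (\<lambda>_. borel))"
    unfolding V_def by (intro measurable_restrict rv)
  have "distr M (PiM I (\<lambda>_. borel)) V = PiM I (\<lambda>i. distr M borel (X i))"
    using indep_vars_iff_distr_eq_PiM'[where I=I and M'="\<lambda>_. borel" and X=X] indep rv I(2) unfolding V_def by blast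
  also have "\<dots> = PiM I (\<lambda>_. \<mu>)"
    unfolding \<mu>_def by (intro PiM_cong) (auto simp: ident)
  finally have V_law: "distr M (PiM I (\<lambda>_. borel)) V = PiM I (\<lambda>_. \<mu>)" .
  have E_sets: "E \<in> sets (PiM I (\<lambda>_. borel))"
    unfolding E_def using I by measurable
  have "{\<omega> \<in> space M. rank I (\<lambda>i. X i \<omega>) j < k} = V -` E \<inter> space M"
    unfolding E_def V_def using measurable_space[OF V_meas] by (auto simp: rank_restrict I(2) V_def)
  then have "prob {\<omega> \<in> space M. rank I (\<lambda>i. X i \<omega>) j < k} = measure (PiM I (\<lambda>_. \<mu>)) E"
    using measure_distr[OF V_meas E_sets] V_law by simp
  moreover have "space (PiM I (\<lambda>_. \<mu>)) = space (PiM I (\<lambda>_. borel))"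
    unfolding \<mu>_def by (simp add: space_PiM)
  moreover have "prob_space \<mu>"
    unfolding \<mu>_def using rv[OF I(2)] by (rule prob_space_distr)
  ultimately show ?thesis
    using measure_PiM_rank_less_ge[of \<mu> I j k] I unfolding E_def \<mu>_def by simp
qed

lemma sorted_le_nth_iff_card_less:
  fixes ys :: "'a::linorder list"
  assumes sorted: "sorted ys" and k: "k < length ys"
  shows "x \<le> ys ! k \<longleftrightarrow> card {i. i < length ys \<and> ys ! i < x} \<le> k"
proof
  assume x: "x \<le> ys ! k"
  have "i < k" if "i < length ys" "ys ! i < x" for i
  proof (rule ccontr)
    assume "\<not> i < k"
    then have "ys ! k \<le> ys ! i" using sorted_nth_mono[OF sorted] that by simp
    then show False using x that by simp
  qed
  then have "{i. i < length ys \<and> ys ! i < x} \<subseteq> {..<k}" by blast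
  then have "card {i. i < length ys \<and> ys ! i < x} \<le> card {..<k}"
    by (intro card_mono) auto
  then show "card {i. i < length ys \<and> ys ! i < x} \<le> k" by simp
next
  assume card_le: "card {i. i < length ys \<and> ys ! i < x} \<le> k"
  show "x \<le> ys ! k"
  proof (rule ccontr)
    assume "\<not> x \<le> ys ! k"
    then have "ys ! i < x" if "i \<le> k" for i
      using sorted_nth_mono[OF sorted that k] by simp
    then have "{..k} \<subseteq> {i. i < length ys \<and> ys ! i < x}" using k by auto
    then have "card {..k} \<le> card {i. i < length ys \<and> ys ! i < x}"
      by (intro card_mono) auto
    then show False using card_le by simp
  qed
qed

lemma le_sort_nth_iff_card_less:
  fixes xs :: "'a::linorder list"
  assumes "k < length xs"
  shows "x \<le> sort xs ! k \<longleftrightarrow> card {i. i < length xs \<and> xs ! i < x} \<le> k"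
proof -
  have "length (filter (\<lambda>y. y < x) (sort xs)) = length (filter (\<lambda>y. y < x) xs)"
    by (metis mset_filter mset_sort size_mset)
  then have "card {i. i < length xs \<and> sort xs ! i < x} = card {i. i < length xs \<and> xs ! i < x}"
    by (simp add: length_filter_conv_card)
  then show ?thesis
    using sorted_le_nth_iff_card_less[of "sort xs" k x] assms by simp
qed

text \<open>No case split on k is needed: for k = 0 the threshold is -\<infinity> and no rank is
  below 0, for k > length xs it is \<infinity> and every rank is at most length xs.\<close>
lemma ereal_le_conformal_qhat_iff:
  "ereal x \<le> conformal_qhat \<alpha> xs \<longleftrightarrow>
     card {i. i < length xs \<and> xs ! i < x} < nat \<lceil>(1 - \<alpha>) * real (length xs + 1)\<rceil>"
proof -
  define k where "k = nat \<lceil>(1 - \<alpha>) * real (length xs + 1)\<rceil>"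
  have "card {i. i < length xs \<and> xs ! i < x} \<le> card {..<length xs}"
    by (intro card_mono) auto
  moreover have "ereal x \<le> ereal (sort xs ! (k - 1)) \<longleftrightarrow> card {i. i < length xs \<and> xs ! i < x} < k"
    if "0 < k" "k \<le> length xs"
    using le_sort_nth_iff_card_less[of "k - 1" xs x] that by auto
  ultimately show ?thesis
    unfolding conformal_qhat_def Let_def k_def[symmetric] by auto
qed

lemma mem_conformal_set_iff_rank_less:
  assumes "y \<in> space MY" "\<sigma> N = s (x, y)"
  shows "y \<in> conformal_set MY s (conformal_qhat \<alpha> (map \<sigma> [0..<N])) x \<longleftrightarrow>
           rank {..N} \<sigma> N < nat \<lceil>(1 - \<alpha>) * real (N + 1)\<rceil>"
proof -
  have "card {i. i < length (map \<sigma> [0..<N]) \<and> map \<sigma> [0..<N] ! i < \<sigma> N} = rank {..N} \<sigma> N"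
    unfolding rank_def by (intro arg_cong[where f=card]) (auto simp: le_less)
  then show ?thesis
    using assms ereal_le_conformal_qhat_iff[of "\<sigma> N" \<alpha> "map \<sigma> [0..<N]"]
    unfolding conformal_set_def by simp
qed

lemma Int_stable_vimage:
  assumes "Int_stable F"
  shows "Int_stable {f -` a \<inter> \<Omega> | a. a \<in> F}"
proof (rule Int_stableI)
  fix a b assume "a \<in> {f -` a \<inter> \<Omega> | a. a \<in> F}" "b \<in> {f -` a \<inter> \<Omega> | a. a \<in> F}"
  then obtain a' b' where "a' \<in> F" "b' \<in> F" "a = f -` a' \<inter> \<Omega>" "b = f -` b' \<inter> \<Omega>" by blast
  then show "a \<inter> b \<in> {f -` a \<inter> \<Omega> | a. a \<in> F}"
    using Int_stableD[OF assms] by (intro CollectI exI[of _ "a' \<inter> b'"]) auto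
qed

lemma (in prob_space) indep_set_vimage_generator:
  assumes A: "A \<in> measurable M MA" and B: "B \<in> measurable M MB"
    and gen: "sets MB = sigma_sets (space MB) G" "Int_stable G"
    and prod: "\<And>a g. a \<in> sets MA \<Longrightarrow> g \<in> G \<Longrightarrow>
      prob (A -` a \<inter> B -` g \<inter> space M) = prob (A -` a \<inter> space M) * prob (B -` g \<inter> space M)"
  shows "indep_set {A -` a \<inter> space M | a. a \<in> sets MA} {B -` b \<inter> space M | b. b \<in> sets MB}"
proof -
  let ?FA = "{A -` a \<inter> space M | a. a \<in> sets MA}"
  let ?FG = "{B -` g \<inter> space M | g. g \<in> G}"
  have G_sets: "G \<subseteq> sets MB"
    using gen(1) by auto
  have "indep_set ?FA ?FG"
  proof (rule indep_setI)
    show "?FA \<subseteq> events" "?FG \<subseteq> events"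
      using A B G_sets by auto
  next
    fix a g assume "a \<in> ?FA" "g \<in> ?FG"
    then obtain a' g' where a': "a' \<in> sets MA" "a = A -` a' \<inter> space M"
      and g': "g' \<in> G" "g = B -` g' \<inter> space M" by blast
    then have "a \<inter> g = A -` a' \<inter> B -` g' \<inter> space M" by blast
    then show "prob (a \<inter> g) = prob a * prob g"
      using prod[OF a'(1) g'(1)] a' g' by simp
  qed
  moreover have "Int_stable ?FA" "Int_stable ?FG"
    using sets.Int_stable gen(2) by (auto intro: Int_stable_vimage)
  ultimately have indep: "indep_set (sigma_sets (space M) ?FA) (sigma_sets (space M) ?FG)"
    by (rule indep_set_sigma_sets)
  have FB: "{B -` b \<inter> space M | b. b \<in> sets MB} = sigma_sets (space M) ?FG"
    unfolding gen(1) by (rule sigma_sets_vimage_commute) (use measurable_space[OF B] in auto)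
  show ?thesis
    unfolding indep_sets2_eq
  proof (intro conjI ballI)
    show "?FA \<subseteq> events" "{B -` b \<inter> space M | b. b \<in> sets MB} \<subseteq> events"
      using A B by auto
    fix a b assume a: "a \<in> ?FA" and b: "b \<in> {B -` b \<inter> space M | b. b \<in> sets MB}"
    from a have "a \<in> sigma_sets (space M) ?FA" by (rule sigma_sets.Basic)
    moreover from b have "b \<in> sigma_sets (space M) ?FG" by (simp only: FB)
    ultimately show "prob (a \<inter> b) = prob a * prob b" by (rule indep_setD[OF indep])
  qed
qed

lemma (in prob_space) indep_set_vimage_compose:
  assumes indep: "indep_set {X -` a \<inter> space M | a. a \<in> sets MX} {Y -` b \<inter> space M | b. b \<in> sets MY}"
    and X: "X \<in> measurable M MX" and Y: "Y \<in> measurable M MY"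
    and f: "f \<in> measurable MX NX" and g: "g \<in> measurable MY NY"
  shows "indep_set {(\<lambda>\<omega>. f (X \<omega>)) -` a \<inter> space M | a. a \<in> sets NX}
                   {(\<lambda>\<omega>. g (Y \<omega>)) -` b \<inter> space M | b. b \<in> sets NY}"
proof -
  have fX: "(\<lambda>\<omega>. f (X \<omega>)) \<in> measurable M NX" and gY: "(\<lambda>\<omega>. g (Y \<omega>)) \<in> measurable M NY"
    using measurable_compose[OF X f] measurable_compose[OF Y g] .
  show ?thesis
    unfolding indep_sets2_eq
  proof (intro conjI ballI)
    show "{(\<lambda>\<omega>. f (X \<omega>)) -` a \<inter> space M | a. a \<in> sets NX} \<subseteq> events"
      "{(\<lambda>\<omega>. g (Y \<omega>)) -` b \<inter> space M | b. b \<in> sets NY} \<subseteq> events"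
      using fX gY by auto
    fix a b
    assume "a \<in> {(\<lambda>\<omega>. f (X \<omega>)) -` a \<inter> space M | a. a \<in> sets NX}"
      and "b \<in> {(\<lambda>\<omega>. g (Y \<omega>)) -` b \<inter> space M | b. b \<in> sets NY}"
    then obtain a' b' where a': "a' \<in> sets NX" "a = (\<lambda>\<omega>. f (X \<omega>)) -` a' \<inter> space M"
      and b': "b' \<in> sets NY" "b = (\<lambda>\<omega>. g (Y \<omega>)) -` b' \<inter> space M" by blast
    have "a = X -` (f -` a' \<inter> space MX) \<inter> space M" "f -` a' \<inter> space MX \<in> sets MX"
      using a' measurable_space[OF X] measurable_sets[OF f] by auto
    moreover have "b = Y -` (g -` b' \<inter> space MY) \<inter> space M" "g -` b' \<inter> space MY \<in> sets MY"
      using b' measurable_space[OF Y] measurable_sets[OF g] by auto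
    ultimately show "prob (a \<inter> b) = prob a * prob b"
      using indep_setD[OF indep] by blast
  qed
qed

lemma (in prob_space) indep_set_vimageD:
  assumes "indep_set {A -` a \<inter> space M | a. a \<in> sets MA} {B -` b \<inter> space M | b. b \<in> sets MB}"
    and "a \<in> sets MA" "b \<in> sets MB"
  shows "prob (A -` a \<inter> B -` b \<inter> space M) = prob (A -` a \<inter> space M) * prob (B -` b \<inter> space M)"
proof -
  have "prob (A -` a \<inter> space M \<inter> (B -` b \<inter> space M)) = prob (A -` a \<inter> space M) * prob (B -` b \<inter> space M)"
    by (rule indep_setD[OF assms(1)]) (use assms(2,3) in blast)+
  moreover have "A -` a \<inter> space M \<inter> (B -` b \<inter> space M) = A -` a \<inter> B -` b \<inter> space M" by blast
  ultimately show ?thesis by simp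
qed

lemma (in prob_space) indep_set_vimage_pair:
  assumes A: "A \<in> measurable M MA" and B: "B \<in> measurable M MB" and C: "C \<in> measurable M MC"
    and AB: "indep_set {A -` a \<inter> space M | a. a \<in> sets MA} {B -` b \<inter> space M | b. b \<in> sets MB}"
    and AB_C: "indep_set {(\<lambda>\<omega>. (A \<omega>, B \<omega>)) -` d \<inter> space M | d. d \<in> sets (MA \<Otimes>\<^sub>M MB)}
                         {C -` c \<inter> space M | c. c \<in> sets MC}"
  shows "indep_set {A -` a \<inter> space M | a. a \<in> sets MA}
                   {(\<lambda>\<omega>. (B \<omega>, C \<omega>)) -` d \<inter> space M | d. d \<in> sets (MB \<Otimes>\<^sub>M MC)}"
proof (rule indep_set_vimage_generator)
  show "A \<in> measurable M MA" by (fact A)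
  show "(\<lambda>\<omega>. (B \<omega>, C \<omega>)) \<in> measurable M (MB \<Otimes>\<^sub>M MC)" using B C by (rule measurable_Pair)
  show "sets (MB \<Otimes>\<^sub>M MC) = sigma_sets (space (MB \<Otimes>\<^sub>M MC)) {b \<times> c | b c. b \<in> sets MB \<and> c \<in> sets MC}"
    by (simp add: sets_pair_measure space_pair_measure)
  show "Int_stable {b \<times> c | b c. b \<in> sets MB \<and> c \<in> sets MC}"
    by (rule Int_stable_pair_measure_generator)
  fix a g assume a: "a \<in> sets MA" and "g \<in> {b \<times> c | b c. b \<in> sets MB \<and> c \<in> sets MC}"
  then obtain b c where b: "b \<in> sets MB" and c: "c \<in> sets MC" and g: "g = b \<times> c" by blast
  have "(\<lambda>\<omega>. (A \<omega>, B \<omega>)) -` (a' \<times> b) = A -` a' \<inter> B -` b" for a' by auto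
  then have ABC: "prob (A -` a' \<inter> B -` b \<inter> C -` c \<inter> space M)
      = prob (A -` a' \<inter> B -` b \<inter> space M) * prob (C -` c \<inter> space M)" if "a' \<in> sets MA" for a'
    using indep_set_vimageD[OF AB_C pair_measureI[OF that b] c] by simp
  have "A -` space MA \<inter> B -` b \<inter> C -` c \<inter> space M = B -` b \<inter> C -` c \<inter> space M"
    "A -` space MA \<inter> B -` b \<inter> space M = B -` b \<inter> space M" "A -` space MA \<inter> space M = space M"
    using measurable_space[OF A] by auto
  then have BC: "prob (B -` b \<inter> C -` c \<inter> space M) = prob (B -` b \<inter> space M) * prob (C -` c \<inter> space M)"
    using ABC[OF sets.top] indep_set_vimageD[OF AB sets.top b] by simp
  have "A -` a \<inter> (\<lambda>\<omega>. (B \<omega>, C \<omega>)) -` g \<inter> space M = A -` a \<inter> B -` b \<inter> C -` c \<inter> space M"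
    "(\<lambda>\<omega>. (B \<omega>, C \<omega>)) -` g \<inter> space M = B -` b \<inter> C -` c \<inter> space M"
    using g by auto
  then show "prob (A -` a \<inter> (\<lambda>\<omega>. (B \<omega>, C \<omega>)) -` g \<inter> space M)
      = prob (A -` a \<inter> space M) * prob ((\<lambda>\<omega>. (B \<omega>, C \<omega>)) -` g \<inter> space M)"
    using ABC[OF a] indep_set_vimageD[OF AB a b] BC by simp
qed

lemma (in prob_space) indep_var_imp_indep_set_vimage:
  assumes "indep_var MA A MB B"
  shows "indep_set {A -` a \<inter> space M | a. a \<in> sets MA} {B -` b \<inter> space M | b. b \<in> sets MB}"
proof -
  have "indep_set (sigma_sets (space M) {A -` a \<inter> space M | a. a \<in> sets MA})
                  (sigma_sets (space M) {B -` b \<inter> space M | b. b \<in> sets MB})"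
    using assms unfolding indep_var_eq by blast
  then show ?thesis
    unfolding indep_set_def by (rule indep_sets_mono_sets) (auto split: bool.split)
qed

lemma measurable_join_last:
  fixes n :: nat
  shows "(\<lambda>x. \<lambda>i\<in>{..n}. if i = n then fst x else snd x i)
     \<in> measurable (M \<Otimes>\<^sub>M (\<Pi>\<^sub>M i\<in>{..<n}. M)) (\<Pi>\<^sub>M i\<in>{..n}. M)"
proof (rule measurable_restrict)
  fix i assume "i \<in> {..n}"
  then show "(\<lambda>x. if i = n then fst x else snd x i) \<in> measurable (M \<Otimes>\<^sub>M (\<Pi>\<^sub>M i\<in>{..<n}. M)) M"
    by (cases "i = n") (auto intro!: measurable_compose[OF measurable_snd measurable_component_singleton])
qed

lemma (in prob_space) indep_set_test_input_scores:
  fixes Z :: "nat \<Rightarrow> 'a \<Rightarrow> 'x \<times> 'y" and s :: "'x \<times> 'y \<Rightarrow> real"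
  assumes iid_indep: "indep_vars (\<lambda>_. MX \<Otimes>\<^sub>M MY) Z {..N}"
    and s_meas: "s \<in> borel_measurable (MX \<Otimes>\<^sub>M MY)"
    and indep_X_score: "indep_set {(\<lambda>\<omega>. fst (Z N \<omega>)) -` A \<inter> space M | A. A \<in> sets MX}
                                 {(\<lambda>\<omega>. s (Z N \<omega>)) -` B \<inter> space M | B. B \<in> sets borel}"
  shows "indep_set {(\<lambda>\<omega>. fst (Z N \<omega>)) -` A \<inter> space M | A. A \<in> sets MX}
           {(\<lambda>\<omega>. \<lambda>i\<in>{..N}. s (Z i \<omega>)) -` V \<inter> space M | V. V \<in> sets (\<Pi>\<^sub>M i\<in>{..N}. borel)}"
proof -
  let ?MZ = "MX \<Otimes>\<^sub>M MY" and ?PB = "\<Pi>\<^sub>M i\<in>{..<N}. (borel :: real measure)"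
  let ?U = "\<lambda>\<omega>. \<lambda>i\<in>{N}. Z i \<omega>" and ?W = "\<lambda>\<omega>. \<lambda>i\<in>{..<N}. Z i \<omega>"
  have Z: "Z i \<in> measurable M ?MZ" if "i \<le> N" for i
    using iid_indep that unfolding indep_vars_def by auto
  have meas [measurable]: "(\<lambda>\<omega>. fst (Z N \<omega>)) \<in> measurable M MX" "(\<lambda>\<omega>. s (Z N \<omega>)) \<in> borel_measurable M"
    "(\<lambda>\<omega>. \<lambda>i\<in>{..<N}. s (Z i \<omega>)) \<in> measurable M ?PB"
    using Z s_meas by (auto intro!: measurable_restrict)
  have "indep_set {?U -` a \<inter> space M | a. a \<in> sets (\<Pi>\<^sub>M i\<in>{N}. ?MZ)}
                   {?W -` b \<inter> space M | b. b \<in> sets (\<Pi>\<^sub>M i\<in>{..<N}. ?MZ)}"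
    by (intro indep_var_imp_indep_set_vimage indep_var_restrict[OF iid_indep]) auto
  from indep_set_vimage_compose[OF this,
      where f="\<lambda>u. (fst (u N), s (u N))" and NX="MX \<Otimes>\<^sub>M borel"
        and g="\<lambda>u. \<lambda>i\<in>{..<N}. s (u i)" and NY="?PB"]
  have XS_W: "indep_set {(\<lambda>\<omega>. (fst (Z N \<omega>), s (Z N \<omega>))) -` d \<inter> space M | d. d \<in> sets (MX \<Otimes>\<^sub>M borel)}
                   {(\<lambda>\<omega>. \<lambda>i\<in>{..<N}. s (Z i \<omega>)) -` e \<inter> space M | e. e \<in> sets ?PB}"
    using Z s_meas by (simp cong: restrict_cong)
  have X_SW: "indep_set {(\<lambda>\<omega>. fst (Z N \<omega>)) -` A \<inter> space M | A. A \<in> sets MX}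
      {(\<lambda>\<omega>. (s (Z N \<omega>), \<lambda>i\<in>{..<N}. s (Z i \<omega>))) -` d \<inter> space M | d. d \<in> sets (borel \<Otimes>\<^sub>M ?PB)}"
    using indep_set_vimage_pair[where A="\<lambda>\<omega>. fst (Z N \<omega>)" and B="\<lambda>\<omega>. s (Z N \<omega>)"
        and C="\<lambda>\<omega>. \<lambda>i\<in>{..<N}. s (Z i \<omega>)", OF meas indep_X_score XS_W] .
  have "(\<lambda>\<omega>. \<lambda>i\<in>{..N}. s (Z i \<omega>))
      = (\<lambda>\<omega>. (\<lambda>x. \<lambda>i\<in>{..N}. if i = N then fst x else snd x i) (s (Z N \<omega>), \<lambda>i\<in>{..<N}. s (Z i \<omega>)))"
    by (auto simp: fun_eq_iff)
  then show ?thesis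
    using indep_set_vimage_compose[where f="\<lambda>x. x", OF X_SW meas(1)
        measurable_Pair[OF meas(2,3)] measurable_id measurable_join_last]
    by simp
qed

lemma (in prob_space) prob_test_input_rank_less:
  fixes Z :: "nat \<Rightarrow> 'a \<Rightarrow> 'x \<times> 'y" and s :: "'x \<times> 'y \<Rightarrow> real"
  assumes iid_indep: "indep_vars (\<lambda>_. MX \<Otimes>\<^sub>M MY) Z {..N}"
    and s_meas: "s \<in> borel_measurable (MX \<Otimes>\<^sub>M MY)"
    and indep_X_score: "indep_set {(\<lambda>\<omega>. fst (Z N \<omega>)) -` A \<inter> space M | A. A \<in> sets MX}
                                 {(\<lambda>\<omega>. s (Z N \<omega>)) -` B \<inter> space M | B. B \<in> sets borel}"
    and A: "A \<in> sets MX"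
  shows "prob ({\<omega> \<in> space M. fst (Z N \<omega>) \<in> A} \<inter> {\<omega> \<in> space M. rank {..N} (\<lambda>i. s (Z i \<omega>)) N < k})
       = prob {\<omega> \<in> space M. fst (Z N \<omega>) \<in> A} * prob {\<omega> \<in> space M. rank {..N} (\<lambda>i. s (Z i \<omega>)) N < k}"
proof -
  let ?V = "\<lambda>\<omega>. \<lambda>i\<in>{..N}. s (Z i \<omega>)"
  define E where "E = {v \<in> space (\<Pi>\<^sub>M i\<in>{..N}. (borel :: real measure)). rank {..N} v N < k}"
  have "E \<in> sets (\<Pi>\<^sub>M i\<in>{..N}. borel)"
    unfolding E_def by measurable
  then have "prob ((\<lambda>\<omega>. fst (Z N \<omega>)) -` A \<inter> ?V -` E \<inter> space M)
      = prob ((\<lambda>\<omega>. fst (Z N \<omega>)) -` A \<inter> space M) * prob (?V -` E \<inter> space M)"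
    using indep_set_vimageD[OF indep_set_test_input_scores[OF iid_indep s_meas indep_X_score] A]
    by blast
  moreover have "{\<omega> \<in> space M. rank {..N} (\<lambda>i. s (Z i \<omega>)) N < k} = ?V -` E \<inter> space M"
  proof -
    have Z: "Z i \<in> measurable M (MX \<Otimes>\<^sub>M MY)" if "i \<le> N" for i
      using iid_indep that unfolding indep_vars_def by auto
    have V: "?V \<in> measurable M (\<Pi>\<^sub>M i\<in>{..N}. borel)"
      by (rule measurable_restrict) (rule measurable_compose[OF Z s_meas], simp)
    show ?thesis
      using measurable_space[OF V] unfolding E_def by (auto simp: rank_restrict)
  qed
  moreover have "{\<omega> \<in> space M. fst (Z N \<omega>) \<in> A} = (\<lambda>\<omega>. fst (Z N \<omega>)) -` A \<inter> space M" by blast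
  moreover have "(\<lambda>\<omega>. fst (Z N \<omega>)) -` A \<inter> space M \<inter> (?V -` E \<inter> space M)
      = (\<lambda>\<omega>. fst (Z N \<omega>)) -` A \<inter> ?V -` E \<inter> space M" by blast
  ultimately show ?thesis by simp
qed

theorem proposition1:
  fixes P :: "'w measure" and MX :: "'a measure" and MY :: "'b measure"
    and \<pi> :: "('a \<times> 'b) measure" and s :: "'a \<times> 'b \<Rightarrow> real"
    and N :: nat and \<alpha> :: real and Z :: "nat \<Rightarrow> 'w \<Rightarrow> 'a \<times> 'b"
  assumes P: "prob_space P"
    and pi: "prob_space \<pi>" "sets \<pi> = sets (MX \<Otimes>\<^sub>M MY)"
    and s_meas: "s \<in> borel_measurable (MX \<Otimes>\<^sub>M MY)"
    and N: "N \<ge> 1"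
    and alpha: "0 \<le> \<alpha>" "\<alpha> \<le> 1"
    and iid_indep: "prob_space.indep_vars P (\<lambda>_. MX \<Otimes>\<^sub>M MY) Z {..N}"
    and iid_law: "\<And>i. i \<le> N \<Longrightarrow> distr P (MX \<Otimes>\<^sub>M MY) (Z i) = \<pi>"
    and indep_X_score: "prob_space.indep_set P
         {(\<lambda>w. fst (Z N w)) -` A \<inter> space P | A. A \<in> sets MX}
         {(\<lambda>w. s (Z N w)) -` B \<inter> space P | B. B \<in> sets (borel :: real measure)}"
    and omega: "\<omega>X \<in> sets MX"
    and pos: "measure P {w \<in> space P. fst (Z N w) \<in> \<omega>X} > 0"
  shows "measure P {w \<in> space P.
            snd (Z N w) \<in> conformal_set MY s (conformal_qhat \<alpha> (map (\<lambda>i. s (Z i w)) [0..<N]))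
                                        (fst (Z N w))
            \<and> fst (Z N w) \<in> \<omega>X}
         / measure P {w \<in> space P. fst (Z N w) \<in> \<omega>X} \<ge> 1 - \<alpha>"
proof -
  interpret prob_space P by (rule P)
  define k where "k = nat \<lceil>(1 - \<alpha>) * real (N + 1)\<rceil>"
  define C where "C = {w \<in> space P. rank {..N} (\<lambda>i. s (Z i w)) N < k}"
  have Z: "Z i \<in> measurable P (MX \<Otimes>\<^sub>M MY)" if "i \<le> N" for i
    using iid_indep that unfolding indep_vars_def by auto
  have "snd (Z N w) \<in> space MY" if "w \<in> space P" for w
    using measurable_space[OF Z that] by (simp add: space_pair_measure mem_Times_iff)
  then have covered: "{w \<in> space P.
            snd (Z N w) \<in> conformal_set MY s (conformal_qhat \<alpha> (map (\<lambda>i. s (Z i w)) [0..<N]))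
                                        (fst (Z N w))
            \<and> fst (Z N w) \<in> \<omega>X} = {w \<in> space P. fst (Z N w) \<in> \<omega>X} \<inter> C"
    unfolding C_def k_def by (auto simp: mem_conformal_set_iff_rank_less)
  have "distr P borel (\<lambda>w. s (Z i w)) = distr \<pi> borel s" if "i \<le> N" for i
    using distr_distr[OF s_meas Z[OF that]] iid_law[OF that] by (simp add: comp_def)
  moreover have "k \<le> card {..N}"
    using alpha unfolding k_def by (simp add: nat_le_iff ceiling_le_iff mult_left_le_one_le)
  ultimately have "real k \<le> prob C * real (N + 1)"
    using prob_rank_less_ge[OF indep_vars_compose2[OF iid_indep s_meas], of N k]
    unfolding C_def by (simp add: mult.commute)
  moreover have "(1 - \<alpha>) * real (N + 1) \<le> real k"
    unfolding k_def by linarith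
  ultimately have "(1 - \<alpha>) * real (N + 1) \<le> prob C * real (N + 1)"
    by linarith
  then have "1 - \<alpha> \<le> prob C"
    by (rule mult_right_le_imp_le) simp
  then show ?thesis
    using covered pos prob_test_input_rank_less[OF iid_indep s_meas indep_X_score omega, of k]
    unfolding C_def by simp
qed

end
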